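(* Let $V$ be a vector space of countably infinite dimension over a field $\mathbb{F}$, and let $u$ be an endomorphism of $V$ with no dominant eigenvalue such that $V^u$ is a torsion $\mathbb{F}[t]$-module. Then $V^u$ has a good stratification.
   Context: A scalar $\lambda$ is a dominant eigenvalue of $u$ if $\operatorname{rk}(u-\lambda\,\mathrm{id}_V)<\dim V$. $V^u$ is the $\mathbb{F}[t]$-module with underlying space $V$ and $t\cdot x:=u(x)$. A stratification of a non-zero $\mathbb{F}[t]$-module $M$ is an increasing family $(M_\alpha)_{\alpha\in D}$ of submodules indexed by a well-ordered set $D$ such that each quotient $M_\alpha/\sum_{\beta<\alpha}M_\beta$ is non-zero and monogenous (cyclic), and $M=\sum_{\alpha\in D}M_\alpha$; its dimension sequence is $n_\alpha:=\dim_{\mathbb{F}}(M_\alpha/\sum_{\beta<\alpha}M_\beta)\in\mathbb{N}^*\cup\{+\infty\}$. It is good if (a) $n_\alpha\ge 2$ whenever $\alpha$ is the minimum of $D$ or the successor of some element of $D$, and (b) $D$ has no maximum. *)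

theory Defs
  imports Main "HOL-Library.Countable_Set" "HOL-Computational_Algebra.Polynomial"
begin

text \<open>Throughout, the vector space V is the whole type 'b, with scalar
multiplication scale over the field 'a; u is an endomorphism of V.\<close>

definition poly_endo :: "('a::field \<Rightarrow> 'b::ab_group_add \<Rightarrow> 'b) \<Rightarrow> ('b \<Rightarrow> 'b) \<Rightarrow> 'a poly \<Rightarrow> 'b \<Rightarrow> 'b" where
  "poly_endo scale u p x = (\<Sum>i\<le>degree p. scale (coeff p i) ((u ^^ i) x))"

text \<open>Dominant eigenvalue: rk(u - c id) < dim V, ranks/dimensions being
cardinals (cardinalities of bases).\<close>
definition dominant_eigenvalue :: "('a::field \<Rightarrow> 'b::ab_group_add \<Rightarrow> 'b) \<Rightarrow> ('b \<Rightarrow> 'b) \<Rightarrow> 'a \<Rightarrow> bool" where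
  "dominant_eigenvalue scale u c \<longleftrightarrow>
     (\<exists>B C. \<not> module.dependent scale B
          \<and> module.span scale B = range (\<lambda>x. u x - scale c x)
          \<and> \<not> module.dependent scale C \<and> module.span scale C = UNIV
          \<and> (card_of B, card_of C) \<in> ordLess)"

text \<open>F[t]-submodules of V^u: u-stable linear subspaces.\<close>
definition fsubmodule :: "('a::field \<Rightarrow> 'b::ab_group_add \<Rightarrow> 'b) \<Rightarrow> ('b \<Rightarrow> 'b) \<Rightarrow> 'b set \<Rightarrow> bool" where
  "fsubmodule scale u S \<longleftrightarrow> module.subspace scale S \<and> u ` S \<subseteq> S"

text \<open>dim_F (M / N) \<ge> k  (k possibly reached only by an infinite dimension):
there are k elements of M linearly independent modulo N.\<close>
definition quot_dim_ge :: "('a::field \<Rightarrow> 'b::ab_group_add \<Rightarrow> 'b) \<Rightarrow> 'b set \<Rightarrow> 'b set \<Rightarrow> nat \<Rightarrow> bool" where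
  "quot_dim_ge scale M N k \<longleftrightarrow>
     (\<exists>S. S \<subseteq> M \<and> finite S \<and> card S = k \<and>
        (\<forall>c. (\<Sum>x\<in>S. scale (c x) x) \<in> N \<longrightarrow> (\<forall>x\<in>S. c x = 0)))"

text \<open>Index set D = Field r with well-order r; the strict order is r minus the diagonal.
below r M a = sum of the M b for b < a (the span of their union; {0} if there is none).\<close>
definition below :: "('a::field \<Rightarrow> 'b::ab_group_add \<Rightarrow> 'b) \<Rightarrow> 'i rel \<Rightarrow> ('i \<Rightarrow> 'b set) \<Rightarrow> 'i \<Rightarrow> 'b set" where
  "below scale r M a = module.span scale (\<Union>b\<in>{b. (b, a) \<in> r \<and> b \<noteq> a}. M b)"

definition stratification :: "('a::field \<Rightarrow> 'b::ab_group_add \<Rightarrow> 'b) \<Rightarrow> ('b \<Rightarrow> 'b) \<Rightarrow> 'i rel \<Rightarrow> ('i \<Rightarrow> 'b set) \<Rightarrow> bool" where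
  "stratification scale u r M \<longleftrightarrow>
     Well_order r
   \<and> (\<forall>a\<in>Field r. fsubmodule scale u (M a))
   \<and> (\<forall>a\<in>Field r. \<forall>b\<in>Field r. (b, a) \<in> r \<longrightarrow> M b \<subseteq> M a)
   \<and> (\<forall>a\<in>Field r. M a \<noteq> below scale r M a
        \<and> (\<exists>x\<in>M a. M a = {n + poly_endo scale u p x | n p. n \<in> below scale r M a}))
   \<and> module.span scale (\<Union>a\<in>Field r. M a) = UNIV"

definition is_min_idx :: "'i rel \<Rightarrow> 'i \<Rightarrow> bool" where
  "is_min_idx r a \<longleftrightarrow> a \<in> Field r \<and> (\<forall>b\<in>Field r. (a, b) \<in> r)"

definition is_succ_idx :: "'i rel \<Rightarrow> 'i \<Rightarrow> bool" where
  "is_succ_idx r a \<longleftrightarrow> a \<in> Field r \<and> (\<exists>b\<in>Field r. b \<noteq> a \<and> (b, a) \<in> r \<and>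
      \<not> (\<exists>c\<in>Field r. c \<noteq> a \<and> c \<noteq> b \<and> (b, c) \<in> r \<and> (c, a) \<in> r))"

definition good_stratification :: "('a::field \<Rightarrow> 'b::ab_group_add \<Rightarrow> 'b) \<Rightarrow> ('b \<Rightarrow> 'b) \<Rightarrow> 'i rel \<Rightarrow> ('i \<Rightarrow> 'b set) \<Rightarrow> bool" where
  "good_stratification scale u r M \<longleftrightarrow>
     stratification scale u r M
   \<and> (\<forall>a\<in>Field r. (is_min_idx r a \<or> is_succ_idx r a) \<longrightarrow> quot_dim_ge scale (M a) (below scale r M a) 2)
   \<and> \<not> (\<exists>a\<in>Field r. \<forall>b\<in>Field r. (b, a) \<in> r)"

end

(* In a torsion module the cyclic quotients of a stratification are
   finite-dimensional, so the quotient generated by x has dimension at least 2 exactly when x and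
   u x are independent modulo the submodule below it.  Enumerating a countable basis, we adjoin
   generators one at a time so that every basis vector is eventually reached.

   If (u - c)^2 has infinite rank for every c, an omega-indexed chain works: modulo a
   finite-dimensional submodule M, a vector e outside M is reached by adjoining at most two
   generators, each independent from its image modulo what precedes.  If u e is not a multiple of
   e modulo M, e itself will do.  Otherwise (u - c) e is in M; then e + y works for any y outside
   M killed modulo M by a polynomial coprime to t - c, and if there is no such y (V/M is
   (t - c)-primary), pick z with (u - c)^2 z outside M and adjoin z, or e + (u - c) z and then z.

   If the range K of (u - c)^2 is finite-dimensional for some c, the chain is indexed by omega^2,
   and the basis vectors are placed at the limit indices (k, 0), where no condition is imposed.
   In block k, over the submodule S built so far (containing K, and modulo which T = u - c still
   has infinite rank), choose y 0, y 1, ... with T (y n) outside the span of S and the earlier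
   y i, T (y i).  These spans are submodules since T^2 maps into K, and y n, u y n are independent
   modulo them.  The block uses only the even-indexed y n: the odd-indexed T (y n) keep T of
   infinite rank modulo the whole block, so that the next block can start. *)

theory Submission
  imports Defs "HOL-Library.Product_Lexorder"
begin

lemma well_order_pullback:
  fixes f :: "nat \<Rightarrow> 'c::wellorder"
  assumes "inj f"
  shows "Well_order {(m, n). f m \<le> f n}" and "Field {(m, n). f m \<le> f n} = UNIV"
proof -
  let ?r = "{(m, n). f m \<le> f n}"
  show F: "Field ?r = UNIV" unfolding Field_def by auto
  have "?r - Id = inv_image {(x, y). x < y} f"
    using assms by (auto simp: inv_image_def inj_eq order.strict_iff_order dest: injD)
  then have "wf (?r - Id)" by (simp add: wf)
  moreover have "linear_order ?r"
    unfolding linear_order_on_def partial_order_on_def preorder_on_def refl_on_def trans_def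
      antisym_def total_on_def F
    using assms by (auto simp: inj_eq dest: injD)
  ultimately show "Well_order ?r" unfolding well_order_on_def by (simp add: F)
qed

lemma lex_pair_limit:
  fixes k :: nat
  assumes "k \<noteq> 0"
  shows "\<not> (\<forall>q. (k, 0) \<le> q)" and "\<not> (\<exists>q < (k, 0). \<forall>s. \<not> (q < s \<and> s < (k, 0 :: nat)))"
proof -
  show "\<not> (\<forall>q. (k, 0) \<le> q)" using assms by (auto dest: spec[of _ "(0, 0)"])
  show "\<not> (\<exists>q < (k, 0). \<forall>s. \<not> (q < s \<and> s < (k, 0 :: nat)))"
  proof
    assume "\<exists>q < (k, 0). \<forall>s. \<not> (q < s \<and> s < (k, 0 :: nat))"
    then obtain i j where "(i, j) < (k, 0 :: nat)" "\<forall>s. \<not> ((i, j) < s \<and> s < (k, 0 :: nat))"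
      by auto
    then show False by (auto dest: spec[of _ "(i, Suc j)"])
  qed
qed

lemma greedy_sequence:
  assumes "\<And>A. finite A \<Longrightarrow> \<exists>y. P A y"
  shows "\<exists>y :: nat \<Rightarrow> 'a. \<forall>n. P (y ` {..<n}) (y n)"
proof -
  define choice where "choice A = (SOME y. P A y)" for A
  define chosen where "chosen = rec_nat {} (\<lambda>_ A. insert (choice A) A)"
  have chosen_Suc: "chosen (Suc n) = insert (choice (chosen n)) (chosen n)" for n
    by (simp add: chosen_def)
  define y where "y n = choice (chosen n)" for n
  have chosen_eq: "chosen n = y ` {..<n}" for n
    by (induction n) (auto simp: chosen_def y_def lessThan_Suc)
  have "P (y ` {..<n}) (y n)" for n
    unfolding y_def chosen_eq[symmetric] choice_def
    by (rule someI_ex) (simp add: assms chosen_eq)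
  then show ?thesis by blast
qed

context vector_space
begin

lemma subspace_scale_iff: "subspace M \<Longrightarrow> a \<noteq> 0 \<Longrightarrow> scale a x \<in> M \<longleftrightarrow> x \<in> M"
  by (metis scale_left_imp_eq scale_scale right_inverse scale_one subspace_scale)

lemma finite_support:
  assumes "finite X" "X \<subseteq> span A"
  shows "\<exists>W. finite W \<and> W \<subseteq> A \<and> X \<subseteq> span W"
  using assms
proof (induction X rule: finite_induct)
  case empty
  then show ?case by blast
next
  case (insert x X)
  then obtain W where W: "finite W" "W \<subseteq> A" "X \<subseteq> span W" by auto
  obtain t r where t: "finite t" "t \<subseteq> A" "x = (\<Sum>a\<in>t. scale (r a) a)"
    using insert.prems unfolding span_explicit by blast
  have "x \<in> span (W \<union> t)"
    unfolding t(3) by (intro span_sum span_scale span_base) blast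
  moreover have "X \<subseteq> span (W \<union> t)" using W(3) span_mono[of W "W \<union> t"] by blast
  ultimately show ?case using W t by (intro exI[of _ "W \<union> t"]) auto
qed

text \<open>A sequence z is independent modulo S if no term lies in the span of S and the earlier
  terms.  Then infinitely many terms cannot lie in the span of S, the other terms and finitely many
  further vectors: a basis of S together with the terms is independent, so a counting argument
  applies.\<close>

lemma independent_Un_seq:
  fixes z :: "nat \<Rightarrow> 'b"
  assumes z: "\<And>k. z k \<notin> span (S \<union> z ` {..<k})"
    and B: "B \<subseteq> S" "independent B"
  shows "independent (B \<union> z ` {..<n})"
proof (induction n)
  case 0
  then show ?case using B by simp
next
  case (Suc n)
  have "span (B \<union> z ` {..<n}) \<subseteq> span (S \<union> z ` {..<n})" using B(1) by (intro span_mono) blast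
  then have "z n \<notin> span (B \<union> z ` {..<n})" using z[of n] by blast
  moreover have "B \<union> z ` {..<Suc n} = insert (z n) (B \<union> z ` {..<n})" by (auto simp: lessThan_Suc)
  ultimately show ?case using Suc by (simp add: independent_insert)
qed

lemma inj_seq_indep_mod:
  fixes z :: "nat \<Rightarrow> 'b"
  assumes z: "\<And>k. z k \<notin> span (S \<union> z ` {..<k})"
  shows "inj z"
proof (rule injI)
  fix j k assume eq: "z j = z k"
  have earlier: "z i \<noteq> z k" if "i < k" for i k
    using z[of k] that span_superset[of "S \<union> z ` {..<k}"] by auto
  from earlier[of j k] earlier[of k j] eq show "j = k"
    by (cases j k rule: linorder_cases) auto
qed

lemma card_le_if_seq_indep_mod:
  fixes z :: "nat \<Rightarrow> 'b"
  assumes z: "\<And>k. z k \<notin> span (S \<union> z ` {..<k})"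
    and B: "B \<subseteq> S" "independent B"
    and W: "finite W" "W \<subseteq> B \<union> z ` (- A)"
    and A': "A' \<subseteq> A" "finite A'"
    and F: "finite F" "z ` A' \<subseteq> span (W \<union> F)"
  shows "card A' \<le> card F"
proof -
  have injz: "inj z" by (rule inj_seq_indep_mod[OF z])
  obtain I where I: "finite I" "W \<inter> z ` (- A) = z ` I"
    using finite_subset_image[of "W \<inter> z ` (- A)" z "- A"] W(1) by blast
  obtain N where N: "I \<union> A' \<subseteq> {..<N}"
    using finite_nat_bounded[of "I \<union> A'"] I(1) A'(2) by blast
  have "W \<union> z ` A' \<subseteq> B \<union> z ` {..<N}" using W(2) I(2) N by blast
  then have "independent (W \<union> z ` A')"
    using independent_Un_seq[OF z B, of N] independent_mono by blast
  moreover have "W \<union> z ` A' \<subseteq> span (W \<union> F)" using F(2) span_superset[of "W \<union> F"] by blast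
  ultimately have "card (W \<union> z ` A') \<le> card (W \<union> F)"
    using independent_span_bound W(1) F(1) by blast
  also have "\<dots> \<le> card W + card F" by (rule card_Un_le)
  finally have le: "card (W \<union> z ` A') \<le> card W + card F" .
  have "z a \<notin> W" if "a \<in> A" for a
  proof
    assume "z a \<in> W"
    moreover have "z a \<notin> B" using z[of a] B(1) span_superset[of "S \<union> z ` {..<a}"] by blast
    ultimately obtain b where "b \<in> - A" "z a = z b" using W(2) by blast
    with injz that show False by (auto dest: injD)
  qed
  then have "card (W \<union> z ` A') = card W + card A'"
    using A' W(1) injz by (subst card_Un_disjoint) (auto simp: card_image inj_on_subset)
  with le show ?thesis by simp
qed

lemma seq_indep_mod_not_spanned:
  fixes z :: "nat \<Rightarrow> 'b"
  assumes z: "\<And>k. z k \<notin> span (S \<union> z ` {..<k})" and A: "infinite A" and F: "finite F"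
  shows "\<not> z ` A \<subseteq> span (S \<union> z ` (- A) \<union> F)"
proof
  assume spanned: "z ` A \<subseteq> span (S \<union> z ` (- A) \<union> F)"
  obtain B where B: "B \<subseteq> S" "independent B" "S \<subseteq> span B"
    using maximal_independent_subset[of S] by metis
  have "S \<union> z ` (- A) \<union> F \<subseteq> span (B \<union> z ` (- A) \<union> F)"
    using B(3) span_mono[of B "B \<union> z ` (- A) \<union> F"] span_superset[of "B \<union> z ` (- A) \<union> F"]
    by blast
  then have "span (S \<union> z ` (- A) \<union> F) \<subseteq> span (B \<union> z ` (- A) \<union> F)"
    by (simp add: span_minimal)
  with spanned have spannedB: "z ` A \<subseteq> span (B \<union> z ` (- A) \<union> F)" by (rule subset_trans)
  obtain A' where A': "A' \<subseteq> A" "finite A'" "card A' = Suc (card F)"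
    using infinite_arbitrarily_large[OF A] by blast
  have "finite (z ` A')" "z ` A' \<subseteq> span (B \<union> z ` (- A) \<union> F)"
    using A'(1,2) spannedB by auto
  then obtain W where W: "finite W" "W \<subseteq> B \<union> z ` (- A) \<union> F" "z ` A' \<subseteq> span W"
    by (metis finite_support)
  have "z ` A' \<subseteq> span ((W - F) \<union> F)" using W(3) span_mono[of W "(W - F) \<union> F"] by blast
  moreover have "finite (W - F)" "W - F \<subseteq> B \<union> z ` (- A)" using W(1,2) by auto
  ultimately have "card A' \<le> card F"
    using card_le_if_seq_indep_mod[OF z B(1,2) _ _ A'(1,2) F] by blast
  with A'(3) show False by simp
qed
end

locale linear_endo = vector_space scale for scale :: "'a::field \<Rightarrow> 'b::ab_group_add \<Rightarrow> 'b" +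
  fixes u :: "'b \<Rightarrow> 'b"
  assumes linear_u: "Vector_Spaces.linear scale scale u"
begin

sublocale u: Vector_Spaces.linear scale scale u by (rule linear_u)

abbreviation upoly :: "'a poly \<Rightarrow> 'b \<Rightarrow> 'b" where
  "upoly p \<equiv> poly_endo scale u p"

abbreviation submod :: "'b set \<Rightarrow> bool" where
  "submod \<equiv> fsubmodule scale u"

lemma linear_funpow: "Vector_Spaces.linear scale scale (u ^^ i)"
proof (induction i)
  case 0
  then show ?case by (simp add: linear_ident)
next
  case (Suc i)
  then show ?case using Vector_Spaces.linear_compose[OF Suc.IH linear_u] by (simp add: o_def)
qed

lemma linear_upoly: "Vector_Spaces.linear scale scale (upoly p)"
proof -
  interpret vector_space_pair scale scale by unfold_locales
  have "Vector_Spaces.linear scale scale ((\<lambda>y. scale (coeff p i) y) \<circ> (u ^^ i))" for i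
    by (rule Vector_Spaces.linear_compose[OF linear_funpow linear_scale_self])
  then show ?thesis
    unfolding poly_endo_def[abs_def] by (intro linear_compose_sum) (simp add: o_def)
qed

lemma upoly_add_right: "upoly p (x + y) = upoly p x + upoly p y"
  and upoly_scale_right: "upoly p (scale a x) = scale a (upoly p x)"
  using Vector_Spaces.linear_iff[of scale scale "upoly p"] linear_upoly by auto

lemma upoly_degree_le:
  assumes "degree p \<le> n"
  shows "upoly p x = (\<Sum>i\<le>n. scale (coeff p i) ((u ^^ i) x))"
proof -
  have "(\<Sum>i\<le>n. scale (coeff p i) ((u ^^ i) x)) = (\<Sum>i\<le>degree p. scale (coeff p i) ((u ^^ i) x))"
    using assms by (intro sum.mono_neutral_right) (auto simp: coeff_eq_0)
  then show ?thesis by (simp add: poly_endo_def)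
qed

lemma upoly_add: "upoly (p + q) x = upoly p x + upoly q x"
proof -
  let ?n = "max (degree p) (degree q)"
  have "degree (p + q) \<le> ?n" by (rule degree_add_le) auto
  then show ?thesis
    by (simp add: upoly_degree_le[of p ?n] upoly_degree_le[of q ?n] upoly_degree_le[of "p + q" ?n]
        scale_left_distrib sum.distrib)
qed

lemma upoly_diff: "upoly (p - q) x = upoly p x - upoly q x"
  by (metis upoly_add add_diff_cancel diff_add_cancel)

lemma upoly_smult: "upoly (smult c p) x = scale c (upoly p x)"
  by (simp add: upoly_degree_le[of "smult c p" "degree p"] upoly_degree_le[of p "degree p"]
      scale_sum_right)

lemma upoly_pCons: "upoly (pCons a p) x = scale a x + u (upoly p x)"
proof -
  have "upoly (pCons a p) x = (\<Sum>i\<le>Suc (degree p). scale (coeff (pCons a p) i) ((u ^^ i) x))"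
    by (rule upoly_degree_le) (simp add: degree_pCons_le)
  also have "\<dots> = scale a x + (\<Sum>i\<le>degree p. scale (coeff p i) ((u ^^ Suc i) x))"
    by (subst sum.atMost_Suc_shift) simp
  also have "(\<Sum>i\<le>degree p. scale (coeff p i) ((u ^^ Suc i) x)) = u (upoly p x)"
    by (simp add: poly_endo_def u.sum u.scale)
  finally show ?thesis .
qed

lemma upoly_0 [simp]: "upoly 0 x = 0"
  by (simp add: poly_endo_def)

lemma upoly_zero_right [simp]: "upoly p 0 = 0"
proof -
  interpret up: Vector_Spaces.linear scale scale "upoly p" by (rule linear_upoly)
  show ?thesis by (rule up.zero)
qed

lemma upoly_const [simp]: "upoly [:c:] x = scale c x"
  using upoly_pCons[of c 0 x] by simp

lemma upoly_1 [simp]: "upoly 1 x = x"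
  using upoly_const[of 1 x] by (simp add: one_pCons)

lemma upoly_linear_poly: "upoly [:a, b:] x = scale a x + scale b (u x)"
  using upoly_pCons[of a "[:b:]" x] by (simp add: u.scale)

lemma upoly_mult: "upoly (p * q) x = upoly p (upoly q x)"
proof (induction p)
  case 0
  then show ?case by simp
next
  case (pCons a p)
  have "upoly (pCons a p * q) x = upoly (smult a q + pCons 0 (p * q)) x" by simp
  also have "\<dots> = upoly (pCons a p) (upoly q x)"
    by (simp add: upoly_add upoly_smult upoly_pCons pCons.IH)
  finally show ?case .
qed

lemma upoly_commute: "upoly p (upoly q x) = upoly q (upoly p x)"
  by (metis upoly_mult mult.commute)

definition shift :: "'a \<Rightarrow> 'b \<Rightarrow> 'b" where
  "shift c x = u x - scale c x"

lemma upoly_shift: "upoly [:-c, 1:] = shift c"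
  by (rule ext) (simp add: upoly_linear_poly shift_def)

lemma linear_shift: "Vector_Spaces.linear scale scale (shift c)"
  using linear_upoly[of "[:-c, 1:]"] by (simp add: upoly_shift)

lemma shift_add: "shift c (x + y) = shift c x + shift c y"
  and shift_scale: "shift c (scale a x) = scale a (shift c x)"
  using Vector_Spaces.linear_iff[of scale scale "shift c"] linear_shift by auto

lemma upoly_shift_commute: "upoly p (shift c x) = shift c (upoly p x)"
  by (metis upoly_shift upoly_commute)

lemma u_eq_shift: "u x = shift c x + scale c x"
  by (simp add: shift_def)

lemma submod_subspace: "submod M \<Longrightarrow> subspace M"
  by (simp add: fsubmodule_def)

lemma submod_upoly: "submod M \<Longrightarrow> x \<in> M \<Longrightarrow> upoly p x \<in> M"
proof -
  assume M: "submod M" and x: "x \<in> M"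
  have "(u ^^ i) x \<in> M" for i
    using M x by (induction i) (auto simp: fsubmodule_def)
  then show ?thesis
    using M unfolding poly_endo_def fsubmodule_def by (auto intro!: subspace_sum subspace_scale)
qed

lemma submod_shift: "submod M \<Longrightarrow> x \<in> M \<Longrightarrow> shift c x \<in> M"
  using submod_upoly[of M x "[:-c, 1:]"] by (simp add: upoly_shift)

lemma submod_span: "u ` A \<subseteq> span A \<Longrightarrow> submod (span A)"
  unfolding fsubmodule_def
  by (metis span_mono span_span subspace_span u.span_image)

lemma submod_span_Union: "(\<And>M. M \<in> \<M> \<Longrightarrow> submod M) \<Longrightarrow> submod (span (\<Union>\<M>))"
  by (rule submod_span) (auto simp: fsubmodule_def intro!: span_base)

text \<open>The remainder theorem: modulo a submodule containing (u - c) e, every p(u) acts on e as p(c).\<close>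

lemma upoly_mod_eval:
  assumes "submod M" "shift c e \<in> M"
  shows "upoly p e - scale (poly p c) e \<in> M"
proof -
  have "upoly p e = upoly ([:-c, 1:] * synthetic_div p c + [:poly p c:]) e"
    by (simp only: synthetic_div_correct')
  also have "\<dots> = upoly (synthetic_div p c) (shift c e) + scale (poly p c) e"
    by (simp only: upoly_add mult.commute[of "[:-c, 1:]"] upoly_mult upoly_shift upoly_const)
  finally show ?thesis using submod_upoly[OF assms] by simp
qed

definition cyclic :: "'b \<Rightarrow> 'b set" where
  "cyclic x = range (\<lambda>p. upoly p x)"

definition generated :: "'b set \<Rightarrow> 'b set" where
  "generated G = span (\<Union>x\<in>G. cyclic x)"

definition adjoin :: "'b set \<Rightarrow> 'b \<Rightarrow> 'b set" where
  "adjoin M x = {n + upoly p x | n p. n \<in> M}"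

lemma in_cyclic: "x \<in> cyclic x"
  unfolding cyclic_def by (rule range_eqI[of _ _ 1]) simp

lemma submod_cyclic: "submod (cyclic x)"
  unfolding fsubmodule_def subspace_def
proof (intro conjI ballI allI subsetI)
  show "0 \<in> cyclic x" unfolding cyclic_def by (rule range_eqI[of _ _ 0]) simp
next
  fix a b assume "a \<in> cyclic x" "b \<in> cyclic x"
  then obtain p q where "a = upoly p x" "b = upoly q x" by (auto simp: cyclic_def)
  then show "a + b \<in> cyclic x" unfolding cyclic_def by (auto intro: range_eqI[of _ _ "p + q"] simp: upoly_add)
next
  fix c a assume "a \<in> cyclic x"
  then obtain p where "a = upoly p x" by (auto simp: cyclic_def)
  then show "scale c a \<in> cyclic x"
    unfolding cyclic_def by (auto intro: range_eqI[of _ _ "smult c p"] simp: upoly_smult)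
next
  fix y assume "y \<in> u ` cyclic x"
  then obtain p where "y = u (upoly p x)" by (auto simp: cyclic_def)
  then have "y = upoly (pCons 0 p) x" by (simp add: upoly_pCons)
  then show "y \<in> cyclic x" by (simp add: cyclic_def)
qed

lemma cyclic_least: "submod M \<Longrightarrow> x \<in> M \<Longrightarrow> cyclic x \<subseteq> M"
  unfolding cyclic_def by (auto intro: submod_upoly)

lemma submod_generated: "submod (generated G)"
  unfolding generated_def by (rule submod_span_Union) (auto simp: submod_cyclic)

lemma generated_superset: "G \<subseteq> generated G"
  unfolding generated_def using in_cyclic by (auto intro!: span_base)

lemma generated_least: "G \<subseteq> M \<Longrightarrow> submod M \<Longrightarrow> generated G \<subseteq> M"
  unfolding generated_def
  by (rule span_minimal) (auto dest: cyclic_least simp: submod_subspace)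

lemma generated_mono: "G \<subseteq> G' \<Longrightarrow> generated G \<subseteq> generated G'"
  unfolding generated_def by (rule span_mono) auto

lemma adjoin_eq_span:
  assumes "subspace M"
  shows "adjoin M x = span (M \<union> cyclic x)"
proof -
  have M: "span M = M" and C: "span (cyclic x) = cyclic x"
    using assms submod_subspace[OF submod_cyclic] by simp_all
  have "span (M \<union> cyclic x) = {a + b | a b. a \<in> M \<and> b \<in> cyclic x}"
    unfolding span_Un M C ..
  then show ?thesis unfolding adjoin_def cyclic_def by blast
qed

lemma submod_adjoin: "submod M \<Longrightarrow> submod (adjoin M x)"
  using submod_span_Union[of "{M, cyclic x}"] submod_cyclic[of x]
  by (auto simp: adjoin_eq_span submod_subspace)

lemma adjoinI: "n \<in> M \<Longrightarrow> n + upoly p x \<in> adjoin M x"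
  unfolding adjoin_def by blast

lemma subset_adjoin: "M \<subseteq> adjoin M x"
  using adjoinI[of _ M 0 x] by auto

lemma in_adjoin: "subspace M \<Longrightarrow> x \<in> adjoin M x"
  using adjoinI[of 0 M 1 x] by (simp add: subspace_0)

lemma adjoin_least: "submod N \<Longrightarrow> M \<subseteq> N \<Longrightarrow> x \<in> N \<Longrightarrow> adjoin M x \<subseteq> N"
  unfolding adjoin_def by (auto intro: subspace_add submod_subspace submod_upoly)

lemma generated_insert: "generated (insert x G) = adjoin (generated G) x"
proof -
  have "generated (insert x G) = span (cyclic x \<union> (\<Union>y\<in>G. cyclic y))"
    by (simp add: generated_def)
  also have "\<dots> = {a + b | a b. a \<in> span (cyclic x) \<and> b \<in> generated G}"
    by (simp add: span_Un generated_def)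
  also have "span (cyclic x) = cyclic x"
    using submod_cyclic by (simp add: submod_subspace)
  also have "{a + b | a b. a \<in> cyclic x \<and> b \<in> generated G} = adjoin (generated G) x"
  proof (intro set_eqI iffI)
    fix v assume "v \<in> {a + b | a b. a \<in> cyclic x \<and> b \<in> generated G}"
    then obtain p n where "v = n + upoly p x" "n \<in> generated G"
      by (auto simp: cyclic_def add.commute)
    then show "v \<in> adjoin (generated G) x" by (simp add: adjoinI)
  next
    fix v assume "v \<in> adjoin (generated G) x"
    then obtain n p where "v = upoly p x + n" "n \<in> generated G"
      by (auto simp: adjoin_def add.commute)
    then show "v \<in> {a + b | a b. a \<in> cyclic x \<and> b \<in> generated G}"
      unfolding cyclic_def by blast
  qed
  finally show ?thesis .
qed

text \<open>The cyclic quotient generated by x has dimension at least 2 iff x and u x are independent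
  modulo the submodule below it.\<close>

definition indep_pair_mod :: "'b set \<Rightarrow> 'b \<Rightarrow> bool" where
  "indep_pair_mod N x \<longleftrightarrow> (\<forall>a b. scale a x + scale b (u x) \<in> N \<longrightarrow> a = 0 \<and> b = 0)"

lemma indep_pair_modD: "indep_pair_mod N x \<Longrightarrow> scale a x + scale b (u x) \<in> N \<Longrightarrow> a = 0 \<and> b = 0"
  unfolding indep_pair_mod_def by blast

lemma indep_pair_mod_antimono: "indep_pair_mod N x \<Longrightarrow> N' \<subseteq> N \<Longrightarrow> indep_pair_mod N' x"
  unfolding indep_pair_mod_def by blast

lemma not_in_if_indep_pair_mod: "indep_pair_mod N x \<Longrightarrow> x \<notin> N"
  using indep_pair_modD[of N x 1 0] by auto

lemma indep_pair_modI_shift: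
  assumes "\<And>a b. scale a x + scale b (shift c x) \<in> N \<Longrightarrow> a = 0 \<and> b = 0"
  shows "indep_pair_mod N x"
  unfolding indep_pair_mod_def
proof (intro allI impI)
  fix a b assume "scale a x + scale b (u x) \<in> N"
  moreover have "scale a x + scale b (u x) = scale (a + b * c) x + scale b (shift c x)"
    by (simp add: shift_def scale_right_diff_distrib scale_left_distrib)
  ultimately show "a = 0 \<and> b = 0" using assms[of "a + b * c" b] by auto
qed

lemma shift_in_if_not_indep_pair_mod:
  assumes "subspace M" "e \<notin> M" "\<not> indep_pair_mod M e"
  obtains c where "shift c e \<in> M"
proof -
  obtain a b where ab: "scale a e + scale b (u e) \<in> M" "\<not> (a = 0 \<and> b = 0)"
    using assms(3) unfolding indep_pair_mod_def by blast
  have "b \<noteq> 0"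
    using ab assms(1,2) subspace_scale_iff[of M a e] by auto
  then have "shift (- a / b) e = scale (inverse b) (scale a e + scale b (u e))"
    by (simp add: shift_def scale_right_distrib scale_scale divide_inverse mult.commute)
  then have "shift (- a / b) e \<in> M" using subspace_scale[OF assms(1) ab(1)] by simp
  then show ?thesis by (rule that)
qed

lemma quot_dim_ge_2_if_indep_pair_mod:
  assumes "indep_pair_mod N x" "subspace N" "x \<in> M" "u x \<in> M"
  shows "quot_dim_ge scale M N 2"
proof -
  have ne: "x \<noteq> u x"
    using indep_pair_modD[OF assms(1), of 1 "-1"] subspace_0[OF assms(2)] by auto
  show ?thesis unfolding quot_dim_ge_def
  proof (intro exI[of _ "{x, u x}"] conjI allI impI ballI)
    fix c y assume "(\<Sum>y\<in>{x, u x}. scale (c y) y) \<in> N" "y \<in> {x, u x}"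
    then show "c y = 0" using ne indep_pair_modD[OF assms(1), of "c x" "c (u x)"] by auto
  qed (use assms ne in auto)
qed

lemma below_generated:
  fixes f :: "nat \<Rightarrow> 'c::wellorder" and h :: "'c \<Rightarrow> 'b"
  assumes "bij f"
  shows "below scale {(m, n). f m \<le> f n} (\<lambda>a. generated (h ` {..f a})) a = generated (h ` {..<f a})"
proof
  let ?M = "\<lambda>a. generated (h ` {..f a})"
  have lt: "{b. (b, a) \<in> {(m, n). f m \<le> f n} \<and> b \<noteq> a} = {b. f b < f a}"
    using bij_is_inj[OF assms] by (auto simp: order.strict_iff_order inj_eq)
  show "below scale {(m, n). f m \<le> f n} ?M a \<subseteq> generated (h ` {..<f a})"
    unfolding below_def lt
    by (intro span_minimal UN_least generated_mono) (auto simp: submod_subspace[OF submod_generated])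
  have "h q \<in> span (\<Union>b\<in>{b. f b < f a}. ?M b)" if "q < f a" for q
  proof -
    obtain b where "q = f b" using bij_is_surj[OF assms] by (metis surjD)
    then have "h q \<in> ?M b" "f b < f a" using that generated_superset[of "h ` {..f b}"] by auto
    then show ?thesis by (blast intro: span_base)
  qed
  moreover have "submod (span (\<Union>b\<in>{b. f b < f a}. ?M b))"
    by (rule submod_span_Union) (auto simp: submod_generated)
  ultimately show "generated (h ` {..<f a}) \<subseteq> below scale {(m, n). f m \<le> f n} ?M a"
    unfolding below_def lt by (intro generated_least) auto
qed

lemma stratification_from_generators:
  fixes f :: "nat \<Rightarrow> 'c::wellorder" and h :: "'c \<Rightarrow> 'b"
  assumes f: "bij f"
    and new: "\<And>p. h p \<notin> generated (h ` {..<p})"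
    and spanning: "span (\<Union>p. generated (h ` {..p})) = UNIV"
  shows "stratification scale u {(m, n). f m \<le> f n} (\<lambda>a. generated (h ` {..f a}))"
  unfolding stratification_def
proof (intro conjI ballI impI)
  let ?r = "{(m, n). f m \<le> f n}"
  let ?M = "\<lambda>a. generated (h ` {..f a})"
  show "Well_order ?r" using well_order_pullback[OF bij_is_inj[OF f]] by simp
  fix a
  show "fsubmodule scale u (?M a)" by (rule submod_generated)
  have "h (f a) \<in> ?M a" using generated_superset[of "h ` {..f a}"] by blast
  then show "?M a \<noteq> below scale ?r ?M a" using new[of "f a"] by (auto simp: below_generated[OF f])
  have "h ` {..f a} = insert (h (f a)) (h ` {..<f a})" by (auto simp: le_less)
  then have "?M a = adjoin (below scale ?r ?M a) (h (f a))"
    by (simp add: below_generated[OF f] generated_insert)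
  with \<open>h (f a) \<in> ?M a\<close> show "\<exists>x\<in>?M a. ?M a = {n + poly_endo scale u p x |n p. n \<in> below scale ?r ?M a}"
    by (auto simp: adjoin_def)
next
  fix a b assume "(b, a) \<in> {(m, n). f m \<le> f n}"
  then show "generated (h ` {..f b}) \<subseteq> generated (h ` {..f a})" by (auto intro!: generated_mono)
next
  have "(\<Union>a. generated (h ` {..f a})) = (\<Union>p\<in>range f. generated (h ` {..p}))"
    by (simp add: image_image)
  then show "span (\<Union>a\<in>Field {(m, n). f m \<le> f n}. generated (h ` {..f a})) = UNIV"
    using spanning bij_is_surj[OF f] by (simp add: well_order_pullback(2)[OF bij_is_inj[OF f]])
qed

lemma min_or_succ_idx_pullback:
  fixes f :: "nat \<Rightarrow> 'c::wellorder"
  assumes f: "bij f" and idx: "is_min_idx {(m, n). f m \<le> f n} a \<or> is_succ_idx {(m, n). f m \<le> f n} a"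
  shows "(\<forall>q. f a \<le> q) \<or> (\<exists>q<f a. \<forall>s. \<not> (q < s \<and> s < f a))"
proof (cases "is_min_idx {(m, n). f m \<le> f n} a")
  case True
  then have "f a \<le> f b" for b by (auto simp: is_min_idx_def Field_def)
  then have "f a \<le> q" for q using bij_is_surj[OF f] by (metis surjD)
  then show ?thesis by blast
next
  case False
  then obtain b where b: "b \<noteq> a" "f b \<le> f a"
    and between: "\<not> (\<exists>c. c \<noteq> a \<and> c \<noteq> b \<and> f b \<le> f c \<and> f c \<le> f a)"
    using idx by (auto simp: is_succ_idx_def Field_def)
  have "f b < f a" using b bij_is_inj[OF f] by (auto simp: order.strict_iff_order inj_eq)
  moreover have "\<not> (f b < f c \<and> f c < f a)" for c
    using between by (auto simp: order.strict_iff_order)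
  then have "\<not> (f b < s \<and> s < f a)" for s
    using bij_is_surj[OF f] by (metis surjD)
  ultimately show ?thesis by blast
qed

lemma good_stratification_from_generators:
  fixes f :: "nat \<Rightarrow> 'c::wellorder" and h :: "'c \<Rightarrow> 'b"
  assumes f: "bij f"
    and no_max: "\<And>p :: 'c. \<exists>q. p < q"
    and new: "\<And>p. h p \<notin> generated (h ` {..<p})"
    and indep: "\<And>p. (\<forall>q. p \<le> q) \<or> (\<exists>q<p. \<forall>s. \<not> (q < s \<and> s < p))
                 \<Longrightarrow> indep_pair_mod (generated (h ` {..<p})) (h p)"
    and spanning: "span (\<Union>p. generated (h ` {..p})) = UNIV"
  shows "good_stratification scale u {(m, n). f m \<le> f n} (\<lambda>a. generated (h ` {..f a}))"
  unfolding good_stratification_def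
proof (intro conjI ballI impI)
  let ?r = "{(m, n). f m \<le> f n}"
  let ?M = "\<lambda>a. generated (h ` {..f a})"
  show "stratification scale u ?r ?M" by (rule stratification_from_generators[OF f new spanning])
  fix a assume "is_min_idx ?r a \<or> is_succ_idx ?r a"
  then have "indep_pair_mod (below scale ?r ?M a) (h (f a))"
    using indep min_or_succ_idx_pullback[OF f] by (simp add: below_generated[OF f])
  moreover have "h (f a) \<in> ?M a" "u (h (f a)) \<in> ?M a"
    using generated_superset[of "h ` {..f a}"] submod_generated[of "h ` {..f a}"]
    by (auto simp: fsubmodule_def)
  ultimately show "quot_dim_ge scale (?M a) (below scale ?r ?M a) 2"
    using quot_dim_ge_2_if_indep_pair_mod submod_subspace[OF submod_generated]
    by (simp add: below_generated[OF f])
next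
  show "\<not> (\<exists>a\<in>Field {(m, n). f m \<le> f n}. \<forall>b\<in>Field {(m, n). f m \<le> f n}. (b, a) \<in> {(m, n). f m \<le> f n})"
  proof
    assume "\<exists>a\<in>Field {(m, n). f m \<le> f n}. \<forall>b\<in>Field {(m, n). f m \<le> f n}. (b, a) \<in> {(m, n). f m \<le> f n}"
    then obtain a where "\<forall>b. f b \<le> f a" by (auto simp: Field_def)
    moreover obtain q where "f a < q" using no_max by blast
    moreover obtain b where "q = f b" using bij_is_surj[OF f] by (metis surjD)
    ultimately show False by (metis not_le)
  qed
qed

definition findim_mod :: "'b set \<Rightarrow> 'b set \<Rightarrow> bool" where
  "findim_mod S A \<longleftrightarrow> (\<exists>F. finite F \<and> A \<subseteq> span (S \<union> F))"

abbreviation findim :: "'b set \<Rightarrow> bool" where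
  "findim \<equiv> findim_mod {}"

lemma findim_mod_trans:
  assumes "findim_mod S' A" "S' \<subseteq> span (S \<union> F)" "finite F"
  shows "findim_mod S A"
proof -
  obtain F' where F': "finite F'" "A \<subseteq> span (S' \<union> F')"
    using assms(1) by (auto simp: findim_mod_def)
  have "S' \<union> F' \<subseteq> span (S \<union> (F \<union> F'))"
    using assms(2) span_mono[of "S \<union> F" "S \<union> (F \<union> F')"] span_superset[of "S \<union> (F \<union> F')"]
    by blast
  then have "span (S' \<union> F') \<subseteq> span (S \<union> (F \<union> F'))" by (simp add: span_minimal)
  with F' assms(3) show ?thesis unfolding findim_mod_def by blast
qed

lemma findim_subset: "findim A \<Longrightarrow> B \<subseteq> A \<Longrightarrow> findim B"
  unfolding findim_mod_def by blast

lemma finite_if_independent_findim: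
  assumes "independent C" "findim C"
  shows "finite C"
proof -
  obtain F where "finite F" "C \<subseteq> span F" using assms(2) by (auto simp: findim_mod_def)
  then show ?thesis using independent_span_bound[OF _ assms(1)] by blast
qed

lemma findim_cyclic:
  assumes "p \<noteq> 0" "upoly p x = 0"
  shows "findim (cyclic x)"
proof -
  have "upoly q x \<in> span ((\<lambda>i. (u ^^ i) x) ` {..<degree p})" for q
  proof -
    have "upoly q x = upoly (q div p * p + q mod p) x" by simp
    also have "\<dots> = upoly (q mod p) x"
      by (simp only: upoly_add upoly_mult assms(2) upoly_zero_right add_0)
    also have "\<dots> \<in> span ((\<lambda>i. (u ^^ i) x) ` {..<degree p})"
      unfolding poly_endo_def
    proof (rule span_sum)
      fix i
      have "coeff (q mod p) i = 0" if "degree p \<le> i"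
        using degree_mod_less[OF assms(1), of q] that by (auto intro: coeff_eq_0)
      then show "scale (coeff (q mod p) i) ((u ^^ i) x) \<in> span ((\<lambda>i. (u ^^ i) x) ` {..<degree p})"
        by (cases "i < degree p") (auto intro: span_scale span_base simp: span_zero)
    qed
    finally show ?thesis .
  qed
  then have "cyclic x \<subseteq> span ({} \<union> (\<lambda>i. (u ^^ i) x) ` {..<degree p})"
    unfolding cyclic_def by auto
  then show ?thesis unfolding findim_mod_def by blast
qed

lemma findim_generated:
  assumes "finite G" "\<And>x. x \<in> G \<Longrightarrow> findim (cyclic x)"
  shows "findim (generated G)"
proof -
  have "\<forall>x\<in>G. \<exists>F. finite F \<and> cyclic x \<subseteq> span F" using assms(2) by (simp add: findim_mod_def)
  then obtain F where F: "\<And>x. x \<in> G \<Longrightarrow> finite (F x)" "\<And>x. x \<in> G \<Longrightarrow> cyclic x \<subseteq> span (F x)"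
    by (metis bchoice)
  have "cyclic x \<subseteq> span (\<Union>x\<in>G. F x)" if "x \<in> G" for x
    using F(2)[OF that] span_mono[of "F x" "\<Union>x\<in>G. F x"] that by blast
  then have "generated G \<subseteq> span (\<Union>x\<in>G. F x)"
    unfolding generated_def by (intro span_minimal) auto
  moreover have "finite (\<Union>x\<in>G. F x)" using F(1) assms(1) by blast
  ultimately show ?thesis unfolding findim_mod_def by auto
qed

lemma not_findim_range_shift:
  assumes C: "independent C" "infinite C" "span C = UNIV"
    and "\<not> dominant_eigenvalue scale u c"
  shows "\<not> findim (range (shift c))"
proof
  assume fin: "findim (range (shift c))"
  have "subspace (range (shift c))"
  proof -
    interpret T: Vector_Spaces.linear scale scale "shift c" by (rule linear_shift)
    show ?thesis by (rule T.subspace_image) simp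
  qed
  moreover obtain B where B: "B \<subseteq> range (shift c)" "independent B" "range (shift c) \<subseteq> span B"
    using maximal_independent_subset[of "range (shift c)"] by blast
  ultimately have "span B = range (shift c)" using span_subspace by blast
  moreover have "finite B" using finite_if_independent_findim[OF B(2) findim_subset[OF fin B(1)]] .
  then have "(card_of B, card_of C) \<in> ordLess"
    using finite_ordLess_infinite[OF card_of_Well_order card_of_Well_order] C(2)
    by (simp add: Field_card_of)
  ultimately have "dominant_eigenvalue scale u c"
    unfolding dominant_eigenvalue_def shift_def using B(2) C(1,3) by blast
  with assms(4) show False by simp
qed

lemma mem_if_shift_mem:
  assumes "submod M" "shift c y \<in> M" "upoly p y \<in> M" "poly p c \<noteq> 0"
  shows "y \<in> M"
proof -
  have "upoly p y - (upoly p y - scale (poly p c) y) \<in> M"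
    using assms(1,3) upoly_mod_eval[OF assms(1,2)] submod_subspace subspace_diff by blast
  then show ?thesis using assms(1,4) by (simp add: subspace_scale_iff submod_subspace)
qed

lemma indep_pair_mod_add_coprime:
  assumes M: "submod M" and e: "shift c e \<in> M" "e \<notin> M"
    and y: "y \<notin> M" "upoly p y \<in> M" "poly p c \<noteq> 0"
  shows "indep_pair_mod M (e + y)"
proof (rule indep_pair_modI_shift)
  have sM: "subspace M" using M by (rule submod_subspace)
  fix g b assume "scale g (e + y) + scale b (shift c (e + y)) \<in> M"
  moreover have "scale g (e + y) + scale b (shift c (e + y))
      = (scale g e + (scale g y + scale b (shift c y))) + scale b (shift c e)"
    by (simp add: shift_add scale_right_distrib algebra_simps)
  ultimately have w: "scale g e + (scale g y + scale b (shift c y)) \<in> M"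
    using e(1) sM by (metis add_diff_cancel subspace_diff subspace_scale)
  have "upoly p (scale g y + scale b (shift c y)) \<in> M"
    using y(2) M sM by (simp add: upoly_add_right upoly_scale_right upoly_shift_commute
        subspace_add subspace_scale submod_shift)
  moreover have "upoly p (scale g e + (scale g y + scale b (shift c y))) \<in> M"
    using submod_upoly[OF M w] .
  ultimately have "upoly p (scale g e) \<in> M"
    using sM by (metis upoly_add_right add_diff_cancel subspace_diff)
  moreover have "shift c (scale g e) \<in> M" using e(1) sM by (simp add: shift_scale subspace_scale)
  ultimately have "scale g e \<in> M" using mem_if_shift_mem[OF M] y(3) by blast
  then have g: "g = 0" using e(2) sM subspace_scale_iff by blast
  with w have "scale b (shift c y) \<in> M" by simp
  moreover have "shift c y \<notin> M" using mem_if_shift_mem[OF M _ y(2,3)] y(1) by blast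
  ultimately have "b = 0" using sM subspace_scale_iff by blast
  with g show "g = 0 \<and> b = 0" by simp
qed

lemma in_adjoin_add_coprime:
  assumes M: "submod M" and e: "shift c e \<in> M"
    and y: "upoly p y \<in> M" "poly p c \<noteq> 0"
  shows "e \<in> adjoin M (e + y)"
proof -
  have sM: "subspace M" using M by (rule submod_subspace)
  define m where "m = upoly p e - scale (poly p c) e"
  have m: "m \<in> M" unfolding m_def by (rule upoly_mod_eval[OF M e])
  define n where "n = - scale (inverse (poly p c)) (m + upoly p y)"
  have "n \<in> M" unfolding n_def using sM m y(1) by (intro subspace_neg subspace_scale subspace_add)
  moreover have "n + upoly (smult (inverse (poly p c)) p) (e + y) = e"
    using y(2) by (simp add: n_def m_def upoly_smult upoly_add_right scale_right_distrib
        scale_right_diff_distrib scale_scale)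
  ultimately show ?thesis by (metis adjoinI)
qed

text \<open>The hypothesis primary says that no element outside M is killed modulo M by a polynomial
  coprime to t - c, i.e. V/M is (t - c)-primary.\<close>

lemma indep_pair_mod_primary:
  assumes M: "submod M" and primary: "\<And>y p. upoly p y \<in> M \<Longrightarrow> poly p c \<noteq> 0 \<Longrightarrow> y \<in> M"
    and z: "shift c z \<notin> M"
  shows "indep_pair_mod M z"
proof (rule indep_pair_modI_shift)
  fix g b assume h: "scale g z + scale b (shift c z) \<in> M"
  have "upoly [:g - b * c, b:] z = scale g z + scale b (shift c z)"
    by (simp add: upoly_linear_poly shift_def scale_right_diff_distrib scale_left_diff_distrib)
  moreover have "poly [:g - b * c, b:] c = g" by (simp add: algebra_simps)
  moreover have "z \<notin> M" using z submod_shift[OF M] by blast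
  ultimately have "g = 0" using primary h by metis
  with h z show "g = 0 \<and> b = 0" using M subspace_scale_iff[OF submod_subspace] by auto
qed

lemma indep_pair_mod_add_shift:
  assumes M: "submod M" and e: "shift c e \<in> M" "e \<notin> adjoin M z"
    and z: "shift c (shift c z) \<notin> M"
  shows "indep_pair_mod M (e + shift c z)"
proof (rule indep_pair_modI_shift)
  have sM: "subspace M" using M by (rule submod_subspace)
  define Mz where "Mz = adjoin M z"
  have sMz: "subspace Mz" unfolding Mz_def using submod_adjoin[OF M] by (rule submod_subspace)
  have z_Mz: "shift c z \<in> Mz" "shift c (shift c z) \<in> Mz"
    unfolding Mz_def using submod_adjoin[OF M] in_adjoin[OF sM] by (auto intro!: submod_shift)
  fix g b assume "scale g (e + shift c z) + scale b (shift c (e + shift c z)) \<in> M"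
  moreover have "scale g (e + shift c z) + scale b (shift c (e + shift c z))
      = (scale g e + (scale g (shift c z) + scale b (shift c (shift c z)))) + scale b (shift c e)"
    by (simp add: shift_add scale_right_distrib algebra_simps)
  ultimately have w: "scale g e + (scale g (shift c z) + scale b (shift c (shift c z))) \<in> M"
    using e(1) sM by (metis add_diff_cancel subspace_diff subspace_scale)
  then have "scale g e + (scale g (shift c z) + scale b (shift c (shift c z))) \<in> Mz"
    using subset_adjoin unfolding Mz_def by blast
  moreover have "scale g (shift c z) + scale b (shift c (shift c z)) \<in> Mz"
    using sMz z_Mz by (intro subspace_add subspace_scale)
  ultimately have "scale g e \<in> Mz" using sMz by (metis add_diff_cancel subspace_diff)
  then have g: "g = 0" using e(2) sMz subspace_scale_iff unfolding Mz_def by blast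
  with w have "scale b (shift c (shift c z)) \<in> M" by simp
  then have "b = 0" using z sM subspace_scale_iff by blast
  with g show "g = 0 \<and> b = 0" by simp
qed

lemma poly_root_if_upoly_add_shift_in_adjoin:
  assumes M: "submod M" and e: "shift c e \<in> M" "e \<notin> adjoin M z"
    and q: "upoly q (e + shift c z) \<in> adjoin M z"
  shows "poly q c = 0"
proof (rule ccontr)
  have subMz: "submod (adjoin M z)" using M by (rule submod_adjoin)
  then have sMz: "subspace (adjoin M z)" by (rule submod_subspace)
  have "shift c z \<in> adjoin M z"
    using subMz in_adjoin[OF submod_subspace[OF M]] by (rule submod_shift)
  then have "upoly q (shift c z) \<in> adjoin M z" using subMz by (simp add: submod_upoly)
  moreover have "upoly q e - scale (poly q c) e \<in> adjoin M z"
    using upoly_mod_eval[OF M e(1)] subset_adjoin by blast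
  moreover have "scale (poly q c) e
      = upoly q (e + shift c z) - (upoly q e - scale (poly q c) e) - upoly q (shift c z)"
    by (simp add: upoly_add_right algebra_simps)
  ultimately have "scale (poly q c) e \<in> adjoin M z" using q sMz by (metis subspace_diff)
  moreover assume "poly q c \<noteq> 0"
  ultimately show False using e(2) sMz subspace_scale_iff by blast
qed

text \<open>A relation between z and (u - c) z modulo the submodule obtained by adjoining e + (u - c) z
  involves e + (u - c) z only through a multiple of u - c, so it is a relation r(u) z in M with
  r(c) equal to the coefficient of z; primariness makes that coefficient vanish.\<close>

lemma indep_pair_mod_adjoin_add_shift:
  assumes M: "submod M" and primary: "\<And>y p. upoly p y \<in> M \<Longrightarrow> poly p c \<noteq> 0 \<Longrightarrow> y \<in> M"
    and e: "shift c e \<in> M" "e \<notin> adjoin M z" and z: "shift c (shift c z) \<notin> M"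
  shows "indep_pair_mod (adjoin M (e + shift c z)) z"
proof (rule indep_pair_modI_shift)
  have sM: "subspace M" using M by (rule submod_subspace)
  have Tz: "shift c z \<notin> M" using z submod_shift[OF M] by blast
  fix g b assume "scale g z + scale b (shift c z) \<in> adjoin M (e + shift c z)"
  then obtain n q where n: "n \<in> M"
    and nq: "scale g z + scale b (shift c z) = n + upoly q (e + shift c z)"
    unfolding adjoin_def by blast
  have "scale g z + scale b (shift c z) \<in> adjoin M z"
    using submod_adjoin[OF M] in_adjoin[OF sM, of z]
    by (auto intro!: subspace_add subspace_scale submod_shift simp: submod_subspace)
  then have "upoly q (e + shift c z) \<in> adjoin M z"
    using n subset_adjoin submod_subspace[OF submod_adjoin[OF M]] nq
    by (metis add_diff_cancel_left' subspace_diff subsetD)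
  then obtain s where s: "q = [:-c, 1:] * s"
    using poly_root_if_upoly_add_shift_in_adjoin[OF M e] synthetic_div_correct'[of c q]
    by (metis add.right_neutral pCons_0_0 smult_0_left)
  have "upoly q (e + shift c z) = upoly s (shift c e) + upoly s (shift c (shift c z))"
    unfolding s mult.commute[of "[:-c, 1:]" s] upoly_mult upoly_shift upoly_add_right shift_add ..
  then have key: "scale g z + scale b (shift c z) - upoly s (shift c (shift c z)) \<in> M"
    using nq n submod_upoly[OF M e(1)] sM by (simp add: subspace_add)
  have g: "g = 0"
  proof (rule ccontr)
    assume "g \<noteq> 0"
    define r where "r = [:g - b * c, b:] - s * ([:-c, 1:] * [:-c, 1:])"
    have "upoly [:g - b * c, b:] z = scale g z + scale b (shift c z)"
      by (simp add: upoly_linear_poly shift_def scale_right_diff_distrib scale_left_diff_distrib)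
    moreover have "upoly (s * ([:-c, 1:] * [:-c, 1:])) z = upoly s (shift c (shift c z))"
      by (simp only: upoly_mult upoly_shift)
    ultimately have "upoly r z = scale g z + scale b (shift c z) - upoly s (shift c (shift c z))"
      by (simp only: r_def upoly_diff)
    moreover have "poly r c = g" by (simp add: r_def algebra_simps)
    ultimately have "z \<in> M" using primary key \<open>g \<noteq> 0\<close> by metis
    then show False using Tz submod_shift[OF M] by blast
  qed
  have "b = 0"
  proof (rule ccontr)
    assume "b \<noteq> 0"
    define r where "r = [:b:] - s * [:-c, 1:]"
    have "upoly r (shift c z) = scale b (shift c z) - upoly s (shift c (shift c z))"
      by (simp only: r_def upoly_diff upoly_mult upoly_shift upoly_const)
    moreover have "poly r c = b" by (simp add: r_def)
    ultimately show False using primary key g Tz \<open>b \<noteq> 0\<close> by (metis add_0 scale_zero_left)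
  qed
  with g show "g = 0 \<and> b = 0" by simp
qed

lemma in_adjoin_adjoin_add_shift:
  assumes "subspace M"
  shows "e \<in> adjoin (adjoin M (e + shift c z)) z"
proof -
  have "e + shift c z \<in> adjoin M (e + shift c z)" by (rule in_adjoin[OF assms])
  moreover have "e + shift c z + upoly (- [:-c, 1:]) z = e"
    using upoly_diff[of 0 "[:-c, 1:]" z] by (simp add: upoly_shift)
  ultimately show ?thesis by (metis adjoinI)
qed

end

locale countable_torsion = linear_endo +
  fixes C :: "'b set"
  assumes basis_independent: "independent C"
    and basis_span: "span C = UNIV"
    and basis_infinite: "infinite C"
    and basis_countable: "countable C"
    and no_dominant_eigenvalue: "\<not> dominant_eigenvalue scale u c"
    and torsion: "\<exists>p. p \<noteq> 0 \<and> upoly p x = 0"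
begin

lemma findim_cyclic_torsion: "findim (cyclic x)"
  using torsion findim_cyclic by blast

lemma findim_generated_finite: "finite G \<Longrightarrow> findim (generated G)"
  by (rule findim_generated) (simp_all add: findim_cyclic_torsion)

lemma findim_adjoin:
  assumes "findim M"
  shows "findim (adjoin M x)"
proof -
  obtain F F' where F: "finite F" "M \<subseteq> span F" and F': "finite F'" "cyclic x \<subseteq> span F'"
    using assms findim_cyclic_torsion[of x] by (auto simp: findim_mod_def)
  have "adjoin M x \<subseteq> span (F \<union> F')"
  proof
    fix v assume "v \<in> adjoin M x"
    then obtain n p where v: "v = n + upoly p x" "n \<in> M" by (auto simp: adjoin_def)
    have "n \<in> span (F \<union> F')" using v(2) F(2) span_mono[of F "F \<union> F'"] by blast
    moreover have "upoly p x \<in> span (F \<union> F')"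
      using F'(2) span_mono[of F' "F \<union> F'"] by (auto simp: cyclic_def)
    ultimately show "v \<in> span (F \<union> F')" unfolding v(1) by (rule span_add)
  qed
  with F(1) F'(1) show ?thesis unfolding findim_mod_def by auto
qed

lemma not_findim_UNIV: "\<not> findim (UNIV :: 'b set)"
proof
  assume "findim (UNIV :: 'b set)"
  then have "findim C" by (rule findim_subset) simp
  then show False using basis_infinite finite_if_independent_findim[OF basis_independent] by blast
qed

lemma ex_not_in_if_findim: "findim M \<Longrightarrow> \<exists>e. e \<notin> M"
  using not_findim_UNIV findim_subset[of M UNIV] by blast

lemma infinite_rank_shift: "\<not> findim (range (shift c))"
  using not_findim_range_shift[OF basis_independent basis_infinite basis_span no_dominant_eigenvalue] .

definition target :: "nat \<Rightarrow> 'b set \<Rightarrow> 'b" where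
  "target k M = (if from_nat_into C k \<notin> M then from_nat_into C k else (SOME e. e \<notin> M))"

lemma target_not_in: "\<exists>e. e \<notin> M \<Longrightarrow> target k M \<notin> M"
  using someI_ex[of "\<lambda>e. e \<notin> M"] by (auto simp: target_def)

lemma basis_in_adjoin_target: "subspace M \<Longrightarrow> from_nat_into C k \<in> adjoin M (target k M)"
  using subset_adjoin[of M] in_adjoin[of M] by (cases "from_nat_into C k \<in> M") (auto simp: target_def)

lemma span_UNIV_if_basis_reached:
  assumes "\<And>k. \<exists>p. from_nat_into C k \<in> X p"
  shows "span (\<Union>p. X p) = UNIV"
proof -
  have "C \<subseteq> (\<Union>p. X p)"
  proof
    fix x assume "x \<in> C"
    then obtain k where "x = from_nat_into C k" by (metis from_nat_into_surj basis_countable)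
    then show "x \<in> (\<Union>p. X p)" using assms by blast
  qed
  then show ?thesis using span_mono[of C] basis_span by auto
qed

end

locale infinite_square_rank = countable_torsion +
  assumes square_rank: "\<not> findim (range (\<lambda>x. shift c (shift c x)))"
begin

lemma reach_in_one_or_two:
  assumes M: "submod M" "findim M" and e: "e \<notin> M"
  shows "(\<exists>x. indep_pair_mod M x \<and> e \<in> adjoin M x) \<or>
    (\<exists>x1 x2. indep_pair_mod M x1 \<and> indep_pair_mod (adjoin M x1) x2 \<and> e \<in> adjoin (adjoin M x1) x2)"
proof (cases "indep_pair_mod M e")
  case True
  then show ?thesis using in_adjoin[OF submod_subspace[OF M(1)]] by blast
next
  case False
  then obtain c where c: "shift c e \<in> M"
    using shift_in_if_not_indep_pair_mod[OF submod_subspace[OF M(1)] e] by blast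
  show ?thesis
  proof (cases "\<exists>y p. y \<notin> M \<and> upoly p y \<in> M \<and> poly p c \<noteq> 0")
    case True
    then obtain y p where y: "y \<notin> M" "upoly p y \<in> M" "poly p c \<noteq> 0" by blast
    have "indep_pair_mod M (e + y)" by (rule indep_pair_mod_add_coprime[OF M(1) c e y])
    moreover have "e \<in> adjoin M (e + y)" by (rule in_adjoin_add_coprime[OF M(1) c y(2,3)])
    ultimately show ?thesis by blast
  next
    case False
    then have primary: "\<And>y p. upoly p y \<in> M \<Longrightarrow> poly p c \<noteq> 0 \<Longrightarrow> y \<in> M" by blast
    obtain z where z: "shift c (shift c z) \<notin> M"
      using square_rank[of c] findim_subset[OF M(2), of "range (\<lambda>x. shift c (shift c x))"] by blast
    show ?thesis
    proof (cases "e \<in> adjoin M z")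
      case True
      moreover have "shift c z \<notin> M" using z submod_shift[OF M(1)] by blast
      then have "indep_pair_mod M z" using indep_pair_mod_primary[OF M(1)] primary by blast
      ultimately show ?thesis by blast
    next
      case False
      have "indep_pair_mod M (e + shift c z)"
        by (rule indep_pair_mod_add_shift[OF M(1) c False z])
      moreover have "indep_pair_mod (adjoin M (e + shift c z)) z"
        by (rule indep_pair_mod_adjoin_add_shift[OF M(1) primary c False z])
      moreover have "e \<in> adjoin (adjoin M (e + shift c z)) z"
        by (rule in_adjoin_adjoin_add_shift[OF submod_subspace[OF M(1)]])
      ultimately show ?thesis by blast
    qed
  qed
qed

lemma reach_in_two:
  assumes M: "submod M" "findim M" and e: "e \<notin> M"
  shows "\<exists>x1 x2. indep_pair_mod M x1 \<and> indep_pair_mod (adjoin M x1) x2 \<and> e \<in> adjoin (adjoin M x1) x2"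
  using reach_in_one_or_two[OF M e]
proof
  assume "\<exists>x. indep_pair_mod M x \<and> e \<in> adjoin M x"
  then obtain x where x: "indep_pair_mod M x" "e \<in> adjoin M x" by blast
  have M': "submod (adjoin M x)" "findim (adjoin M x)"
    using submod_adjoin[OF M(1)] findim_adjoin[OF M(2)] by auto
  obtain e' where "e' \<notin> adjoin M x" using ex_not_in_if_findim[OF M'(2)] by blast
  from reach_in_one_or_two[OF M' this] obtain x' where "indep_pair_mod (adjoin M x) x'" by blast
  with x show ?thesis using subset_adjoin by blast
qed

definition pair_step :: "nat \<Rightarrow> 'b set \<Rightarrow> 'b \<times> 'b" where
  "pair_step k G = (SOME (x1, x2). indep_pair_mod (generated G) x1
     \<and> indep_pair_mod (adjoin (generated G) x1) x2
     \<and> target k (generated G) \<in> adjoin (adjoin (generated G) x1) x2)"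

primrec stage :: "nat \<Rightarrow> 'b set" where
  "stage 0 = {}"
| "stage (Suc k) = insert (snd (pair_step k (stage k))) (insert (fst (pair_step k (stage k))) (stage k))"

definition gen_seq :: "nat \<Rightarrow> 'b" where
  "gen_seq n = (if even n then fst else snd) (pair_step (n div 2) (stage (n div 2)))"

lemma stage_eq: "stage k = gen_seq ` {..<2 * k}"
proof (induction k)
  case 0
  then show ?case by simp
next
  case (Suc k)
  have "{..<2 * Suc k} = insert (2 * k + 1) (insert (2 * k) {..<2 * k})" by auto
  with Suc show ?case by (simp add: gen_seq_def)
qed

lemma gen_seq_below_even: "gen_seq ` {..<2 * k} = stage k"
  by (simp add: stage_eq)

lemma gen_seq_below_odd: "gen_seq ` {..<2 * k + 1} = insert (gen_seq (2 * k)) (stage k)"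
  by (simp add: stage_eq lessThan_Suc[of "2 * k", simplified])

lemma pair_step_spec:
  "indep_pair_mod (generated (stage k)) (gen_seq (2 * k))"
  "indep_pair_mod (generated (insert (gen_seq (2 * k)) (stage k))) (gen_seq (2 * k + 1))"
  "from_nat_into C k \<in> generated (stage (Suc k))"
proof -
  let ?M = "generated (stage k)"
  have M: "submod ?M" "findim ?M"
    using submod_generated findim_generated_finite[of "stage k"] by (auto simp: stage_eq)
  have t: "target k ?M \<notin> ?M" using target_not_in ex_not_in_if_findim[OF M(2)] by blast
  obtain x1 x2 where "indep_pair_mod ?M x1" "indep_pair_mod (adjoin ?M x1) x2"
    "target k ?M \<in> adjoin (adjoin ?M x1) x2"
    using reach_in_two[OF M t] by blast
  then have P: "indep_pair_mod ?M (gen_seq (2 * k))"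
    "indep_pair_mod (adjoin ?M (gen_seq (2 * k))) (gen_seq (2 * k + 1))"
    "target k ?M \<in> adjoin (adjoin ?M (gen_seq (2 * k))) (gen_seq (2 * k + 1))"
    unfolding gen_seq_def pair_step_def
    using someI[of "\<lambda>(x1, x2). indep_pair_mod ?M x1 \<and> indep_pair_mod (adjoin ?M x1) x2
        \<and> target k ?M \<in> adjoin (adjoin ?M x1) x2" "(x1, x2)"]
    by (simp_all add: case_prod_beta)
  then show "indep_pair_mod (generated (stage k)) (gen_seq (2 * k))"
    "indep_pair_mod (generated (insert (gen_seq (2 * k)) (stage k))) (gen_seq (2 * k + 1))"
    by (simp_all add: generated_insert)
  have next_stage: "generated (stage (Suc k)) = adjoin (adjoin ?M (gen_seq (2 * k))) (gen_seq (2 * k + 1))"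
    by (simp add: generated_insert gen_seq_def)
  have "adjoin ?M (target k ?M) \<subseteq> generated (stage (Suc k))"
    unfolding next_stage using P(3) subset_adjoin[of ?M] subset_adjoin[of "adjoin ?M _"]
    by (intro adjoin_least submod_adjoin M(1)) blast+
  then show "from_nat_into C k \<in> generated (stage (Suc k))"
    using basis_in_adjoin_target[OF submod_subspace[OF M(1)], of k] by blast
qed

lemma ex_good_stratification: "\<exists>(r :: nat rel) M. good_stratification scale u r M"
proof -
  have indep: "indep_pair_mod (generated (gen_seq ` {..<n})) (gen_seq n)" for n
  proof (cases "even n")
    case True
    then obtain k where "n = 2 * k" by (rule evenE)
    then show ?thesis using pair_step_spec(1)[of k] by (simp add: gen_seq_below_even)
  next
    case False
    then obtain k where "n = 2 * k + 1" by (rule oddE)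
    then show ?thesis using pair_step_spec(2)[of k] gen_seq_below_odd[of k] by simp
  qed
  have reach: "from_nat_into C k \<in> generated (gen_seq ` {..2 * k + 1})" for k
    using pair_step_spec(3)[of k] by (simp add: stage_eq lessThan_Suc_atMost[symmetric])
  have spanning: "span (\<Union>n. generated (gen_seq ` {..n})) = UNIV"
    by (rule span_UNIV_if_basis_reached) (use reach in blast)
  have "good_stratification scale u {(m, n). id m \<le> id n} (\<lambda>a. generated (gen_seq ` {..id a}))"
  proof (rule good_stratification_from_generators[OF _ _ _ _ spanning])
    show "\<exists>q. p < q" for p :: nat by (rule exI[of _ "Suc p"]) simp
    show "gen_seq p \<notin> generated (gen_seq ` {..<p})" for p
      by (rule not_in_if_indep_pair_mod[OF indep])
  qed (simp_all add: indep bij_id[unfolded id_def])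
  then show ?thesis by blast
qed

end

locale finite_square_rank = countable_torsion +
  fixes c :: 'a
  assumes findim_square: "findim (range (\<lambda>x. shift c (shift c x)))"
begin

abbreviation T :: "'b \<Rightarrow> 'b" where
  "T \<equiv> shift c"

definition K :: "'b set" where
  "K = range (\<lambda>x. T (T x))"

lemma TT_in_K: "T (T x) \<in> K"
  by (simp add: K_def)

lemma submod_K: "submod K"
proof -
  interpret T: Vector_Spaces.linear scale scale T by (rule linear_shift)
  have "K = T ` T ` UNIV" by (auto simp: K_def)
  then have "subspace K" by (simp add: T.subspace_image)
  moreover have "u (T (T x)) = T (T (u x))" for x
    using upoly_shift_commute[of "[:0, 1:]"] by (simp add: upoly_linear_poly)
  then have "u ` K \<subseteq> K" by (auto simp: K_def)
  ultimately show ?thesis by (simp add: fsubmodule_def)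
qed

lemma not_findim_mod_K: "\<not> findim_mod K (range T)"
proof
  assume "findim_mod K (range T)"
  moreover obtain F where "K \<subseteq> span ({} \<union> F)" "finite F"
    using findim_square by (auto simp: findim_mod_def K_def)
  ultimately have "findim (range T)" by (rule findim_mod_trans)
  with infinite_rank_shift show False by blast
qed

lemma submod_span_pairs:
  assumes S: "submod S" "K \<subseteq> S"
  shows "submod (span (S \<union> Y \<union> T ` Y))"
proof (rule submod_span)
  have "u w \<in> span (S \<union> Y \<union> T ` Y)" if w: "w \<in> S \<union> Y \<union> T ` Y" for w
  proof -
    have base: "S \<union> Y \<union> T ` Y \<subseteq> span (S \<union> Y \<union> T ` Y)" by (rule span_superset)
    consider "w \<in> S" | "w \<in> Y" | x where "x \<in> Y" "w = T x" using w by blast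
    then show ?thesis
    proof cases
      case 1
      then show ?thesis using S(1) base by (auto simp: fsubmodule_def)
    next
      case 2
      then have "T w \<in> span (S \<union> Y \<union> T ` Y)" "w \<in> span (S \<union> Y \<union> T ` Y)" using base by blast+
      then show ?thesis by (simp add: u_eq_shift[of w c] span_add span_scale)
    next
      case 3
      then have "u w = T (T x) + scale c (T x)" by (simp add: u_eq_shift[of _ c])
      moreover have "T (T x) \<in> span (S \<union> Y \<union> T ` Y)" "T x \<in> span (S \<union> Y \<union> T ` Y)"
        using 3 TT_in_K S(2) base by blast+
      ultimately show ?thesis by (simp add: span_add span_scale)
    qed
  qed
  then show "u ` (S \<union> Y \<union> T ` Y) \<subseteq> span (S \<union> Y \<union> T ` Y)" by blast
qed

definition yseq :: "'b set \<Rightarrow> nat \<Rightarrow> 'b" where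
  "yseq S = (SOME y. \<forall>n. T (y n) \<notin> span (S \<union> y ` {..<n} \<union> T ` y ` {..<n}))"

lemma shift_yseq_fresh:
  assumes "\<not> findim_mod S (range T)"
  shows "T (yseq S n) \<notin> span (S \<union> yseq S ` {..<n} \<union> T ` yseq S ` {..<n})"
proof -
  have "\<exists>y. T y \<notin> span (S \<union> A \<union> T ` A)" if "finite A" for A
  proof (rule ccontr)
    assume "\<nexists>y. T y \<notin> span (S \<union> A \<union> T ` A)"
    then have "range T \<subseteq> span (S \<union> (A \<union> T ` A))" by (auto simp: Un_assoc)
    moreover have "finite (A \<union> T ` A)" using that by simp
    ultimately show False using assms unfolding findim_mod_def by blast
  qed
  then have "\<exists>y :: nat \<Rightarrow> 'b. \<forall>n. T (y n) \<notin> span (S \<union> y ` {..<n} \<union> T ` y ` {..<n})"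
    by (rule greedy_sequence)
  then show ?thesis unfolding yseq_def by (rule someI_ex[THEN spec])
qed

definition zseq :: "'b set \<Rightarrow> nat \<Rightarrow> 'b" where
  "zseq S k = (if even k then yseq S (k div 2) else T (yseq S (k div 2)))"

lemma zseq_below: "zseq S ` {..<2 * n} = yseq S ` {..<n} \<union> T ` yseq S ` {..<n}"
proof -
  have "{..<2 * n} = (\<lambda>i. 2 * i) ` {..<n} \<union> (\<lambda>i. 2 * i + 1) ` {..<n}"
  proof (intro set_eqI iffI)
    fix k assume "k \<in> {..<2 * n}"
    then show "k \<in> (\<lambda>i. 2 * i) ` {..<n} \<union> (\<lambda>i. 2 * i + 1) ` {..<n}"
      by (cases "even k") (auto elim!: evenE oddE)
  qed auto
  moreover have "zseq S ` (\<lambda>i. 2 * i) ` {..<n} = yseq S ` {..<n}"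
    unfolding image_image zseq_def by simp
  moreover have "zseq S ` (\<lambda>i. 2 * i + 1) ` {..<n} = T ` yseq S ` {..<n}"
    unfolding image_image zseq_def by simp
  ultimately show ?thesis by (simp only: image_Un)
qed

context
  fixes S assumes S: "submod S" "K \<subseteq> S" "\<not> findim_mod S (range T)"
begin

lemma submod_span_yseq: "submod (span (S \<union> yseq S ` {..<n} \<union> T ` yseq S ` {..<n}))"
  using submod_span_pairs[OF S(1,2)] .

lemma yseq_not_in: "yseq S n \<notin> span (S \<union> yseq S ` {..<n} \<union> T ` yseq S ` {..<n})"
  using shift_yseq_fresh[OF S(3), of n] submod_shift[OF submod_span_yseq] by blast

lemma shift_yseq_not_in:
  "T (yseq S n) \<notin> span (insert (yseq S n) (S \<union> yseq S ` {..<n} \<union> T ` yseq S ` {..<n}))"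
proof
  let ?P = "span (S \<union> yseq S ` {..<n} \<union> T ` yseq S ` {..<n})"
  let ?y = "yseq S n"
  interpret Tl: Vector_Spaces.linear scale scale T by (rule linear_shift)
  have Ty: "T ?y \<notin> ?P" by (rule shift_yseq_fresh[OF S(3)])
  assume "T ?y \<in> span (insert ?y (S \<union> yseq S ` {..<n} \<union> T ` yseq S ` {..<n}))"
  then obtain k where k: "T ?y - scale k ?y \<in> ?P" unfolding span_breakdown_eq by blast
  have "T (T ?y - scale k ?y) \<in> ?P" using submod_shift[OF submod_span_yseq k] .
  then have "T (T ?y) - scale k (T ?y) \<in> ?P" by (simp only: Tl.diff Tl.scale)
  moreover have "T (T ?y) \<in> ?P" using TT_in_K S(2) by (intro span_base) blast
  ultimately have "scale k (T ?y) \<in> ?P" using span_diff by fastforce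
  moreover have "k \<noteq> 0"
  proof
    assume "k = 0"
    with k Ty show False by simp
  qed
  ultimately show False using Ty subspace_scale_iff[OF subspace_span] by blast
qed

lemma indep_pair_mod_yseq: "indep_pair_mod (span (S \<union> yseq S ` {..<n} \<union> T ` yseq S ` {..<n})) (yseq S n)"
proof (rule indep_pair_modI_shift)
  let ?P = "span (S \<union> yseq S ` {..<n} \<union> T ` yseq S ` {..<n})"
  let ?y = "yseq S n"
  fix g b assume h: "scale g ?y + scale b (T ?y) \<in> ?P"
  have b: "b = 0"
  proof (rule ccontr)
    assume "b \<noteq> 0"
    then have "T ?y - scale (- (g / b)) ?y = scale (inverse b) (scale g ?y + scale b (T ?y))"
      by (simp add: scale_right_distrib scale_scale divide_inverse mult.commute)
    also have "\<dots> \<in> ?P" using h by (rule span_scale)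
    finally have "T ?y \<in> span (insert ?y (S \<union> yseq S ` {..<n} \<union> T ` yseq S ` {..<n}))"
      unfolding span_breakdown_eq by blast
    with shift_yseq_not_in show False by blast
  qed
  with h have "scale g ?y \<in> ?P" by simp
  then have "g = 0" using yseq_not_in subspace_scale_iff[OF subspace_span] by blast
  with b show "g = 0 \<and> b = 0" by simp
qed

lemma zseq_not_in: "zseq S k \<notin> span (S \<union> zseq S ` {..<k})"
proof (cases "even k")
  case True
  then obtain n where k: "k = 2 * n" by (rule evenE)
  then have "zseq S k = yseq S n" by (simp add: zseq_def)
  then show ?thesis using yseq_not_in[of n] by (simp add: k zseq_below Un_assoc)
next
  case False
  then obtain n where k: "k = 2 * n + 1" by (rule oddE)
  have "zseq S k = T (yseq S n)" "zseq S (2 * n) = yseq S n" by (simp_all add: zseq_def k)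
  moreover have "{..<k} = insert (2 * n) {..<2 * n}" by (auto simp: k)
  ultimately show ?thesis using shift_yseq_not_in[of n] by (simp add: zseq_below Un_assoc)
qed

text \<open>The images of the odd-indexed y n stay independent modulo everything else.\<close>

lemma not_findim_mod_even_yseq:
  "\<not> findim_mod (S \<union> yseq S ` {n. even n} \<union> T ` yseq S ` {n. even n}) (range T)"
proof
  let ?E = "yseq S ` {n. even n} \<union> T ` yseq S ` {n. even n}"
  let ?A = "{k :: nat. k mod 4 = 3}"
  assume "findim_mod (S \<union> yseq S ` {n. even n} \<union> T ` yseq S ` {n. even n}) (range T)"
  then obtain F where F: "finite F" "range T \<subseteq> span (S \<union> ?E \<union> F)"
    by (auto simp: findim_mod_def Un_assoc)
  have "yseq S (2 * i) = zseq S (4 * i)" "T (yseq S (2 * i)) = zseq S (4 * i + 1)" for i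
  proof -
    have "(4 * i) div 2 = 2 * i" "(4 * i + 1) div 2 = 2 * i" by presburger+
    then show "yseq S (2 * i) = zseq S (4 * i)" "T (yseq S (2 * i)) = zseq S (4 * i + 1)"
      by (simp_all add: zseq_def)
  qed
  moreover have "4 * i \<notin> ?A" "4 * i + 1 \<notin> ?A" for i :: nat by simp_all
  ultimately have "?E \<subseteq> zseq S ` (- ?A)" by (auto elim!: evenE)
  then have "span (S \<union> ?E \<union> F) \<subseteq> span (S \<union> zseq S ` (- ?A) \<union> F)"
    by (intro span_mono) blast
  moreover have "zseq S ` ?A \<subseteq> range T"
  proof
    fix v assume "v \<in> zseq S ` ?A"
    then obtain k where k: "v = zseq S k" "k mod 4 = 3" by blast
    then have "odd k" by presburger
    with k have "v = T (yseq S (k div 2))" by (simp add: zseq_def)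
    then show "v \<in> range T" by blast
  qed
  ultimately have "zseq S ` ?A \<subseteq> span (S \<union> zseq S ` (- ?A) \<union> F)" using F(2) by blast
  moreover have "infinite ?A"
    unfolding infinite_nat_iff_unbounded
  proof
    fix m :: nat show "\<exists>k>m. k \<in> ?A" by (rule exI[of _ "4 * m + 3"]) simp
  qed
  ultimately show False using seq_indep_mod_not_spanned[OF zseq_not_in _ F(1)] by blast
qed

end

definition Kspan :: "'b set \<Rightarrow> 'b set" where
  "Kspan G = span (generated G \<union> K)"

lemma submod_Kspan: "submod (Kspan G)"
  unfolding Kspan_def
  by (rule submod_span) (use submod_generated[of G] submod_K in \<open>auto simp: fsubmodule_def intro: span_base\<close>)

lemma generated_subset_Kspan: "generated G \<subseteq> Kspan G"
  and K_subset_Kspan: "K \<subseteq> Kspan G"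
  unfolding Kspan_def using span_superset by blast+

lemma ex_not_in_generated:
  assumes "\<not> findim_mod (Kspan G) (range T)"
  shows "\<exists>e. e \<notin> generated G"
proof (rule ccontr)
  assume "\<nexists>e. e \<notin> generated G"
  then have "range T \<subseteq> span (Kspan G \<union> {})" using generated_subset_Kspan span_superset by blast
  with assms show False unfolding findim_mod_def by blast
qed

lemma not_findim_mod_Kspan_insert:
  assumes "\<not> findim_mod (Kspan G) (range T)"
  shows "\<not> findim_mod (Kspan (insert t G)) (range T)"
proof
  obtain F where F: "finite F" "cyclic t \<subseteq> span F"
    using findim_cyclic_torsion[of t] by (auto simp: findim_mod_def)
  have "generated (insert t G) \<subseteq> span (Kspan G \<union> F)"
  proof
    fix v assume "v \<in> generated (insert t G)"
    then obtain n p where v: "v = n + upoly p t" "n \<in> generated G"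
      by (auto simp: generated_insert adjoin_def)
    have "n \<in> span (Kspan G \<union> F)" using v(2) generated_subset_Kspan span_superset by blast
    moreover have "upoly p t \<in> span (Kspan G \<union> F)"
      using F(2) span_mono[of F "Kspan G \<union> F"] by (auto simp: cyclic_def)
    ultimately show "v \<in> span (Kspan G \<union> F)" unfolding v(1) by (rule span_add)
  qed
  moreover have "K \<subseteq> span (Kspan G \<union> F)" using K_subset_Kspan span_superset by blast
  ultimately have "Kspan (insert t G) \<subseteq> span (Kspan G \<union> F)"
    unfolding Kspan_def by (intro span_minimal) auto
  moreover assume "findim_mod (Kspan (insert t G)) (range T)"
  ultimately show False using findim_mod_trans F(1) assms by blast
qed

text \<open>Index (k, 0) with k > 0 is a limit in the lexicographic order, so the target placed there
  needs no independence condition.\<close>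

definition block_base :: "nat \<Rightarrow> 'b set \<Rightarrow> 'b set" where
  "block_base k G = Kspan (if k = 0 then G else insert (target (k - 1) (generated G)) G)"

definition block :: "nat \<Rightarrow> 'b set \<Rightarrow> nat \<Rightarrow> 'b" where
  "block k G j = (if k \<noteq> 0 \<and> j = 0 then target (k - 1) (generated G) else yseq (block_base k G) (2 * j))"

primrec block_stage :: "nat \<Rightarrow> 'b set" where
  "block_stage 0 = {}"
| "block_stage (Suc k) = block_stage k \<union> range (block k (block_stage k))"

definition gen_pair :: "nat \<times> nat \<Rightarrow> 'b" where
  "gen_pair p = block (fst p) (block_stage (fst p)) (snd p)"

lemma submod_block_base: "submod (block_base k G)"
  and K_subset_block_base: "K \<subseteq> block_base k G"
  by (simp_all add: block_base_def submod_Kspan K_subset_Kspan)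

lemma subset_block_base: "G \<subseteq> block_base k G"
  and target_in_block_base: "k \<noteq> 0 \<Longrightarrow> target (k - 1) (generated G) \<in> block_base k G"
proof -
  let ?G' = "if k = 0 then G else insert (target (k - 1) (generated G)) G"
  have "?G' \<subseteq> block_base k G"
    unfolding block_base_def using generated_superset generated_subset_Kspan by (rule subset_trans)
  then show "G \<subseteq> block_base k G" "k \<noteq> 0 \<Longrightarrow> target (k - 1) (generated G) \<in> block_base k G"
    by (auto split: if_splits)
qed

lemma not_findim_mod_block_base:
  "\<not> findim_mod (Kspan G) (range T) \<Longrightarrow> \<not> findim_mod (block_base k G) (range T)"
  by (simp add: block_base_def not_findim_mod_Kspan_insert)

lemma not_findim_mod_block_stage: "\<not> findim_mod (Kspan (block_stage k)) (range T)"
proof (induction k)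
  case 0
  have "Kspan (block_stage 0) \<subseteq> span (K \<union> {})"
    by (simp add: Kspan_def generated_def span_minimal span_superset span_zero)
  then show ?case using findim_mod_trans[OF _ _ finite.emptyI] not_findim_mod_K by blast
next
  case (Suc k)
  let ?G = "block_stage k"
  let ?S = "block_base k ?G"
  let ?Y = "yseq ?S ` {n. even n}"
  have S: "submod ?S" "K \<subseteq> ?S" "\<not> findim_mod ?S (range T)"
    by (simp_all add: submod_block_base K_subset_block_base not_findim_mod_block_base[OF Suc.IH])
  have P: "submod (span (?S \<union> ?Y \<union> T ` ?Y))" by (rule submod_span_pairs[OF S(1,2)])
  have "range (block k ?G) \<subseteq> ?S \<union> ?Y"
    using target_in_block_base by (auto simp: block_def)
  then have "block_stage (Suc k) \<subseteq> ?S \<union> ?Y" using subset_block_base[of ?G k] by auto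
  moreover have SY: "?S \<union> ?Y \<subseteq> span (?S \<union> ?Y \<union> T ` ?Y)"
    using span_superset[of "?S \<union> ?Y \<union> T ` ?Y"] by blast
  ultimately have "generated (block_stage (Suc k)) \<subseteq> span (?S \<union> ?Y \<union> T ` ?Y)"
    by (intro generated_least[OF _ P]) blast
  moreover have "K \<subseteq> span (?S \<union> ?Y \<union> T ` ?Y)" using S(2) SY by blast
  ultimately have "Kspan (block_stage (Suc k)) \<subseteq> span (?S \<union> ?Y \<union> T ` ?Y \<union> {})"
    unfolding Kspan_def by (simp add: span_minimal)
  then show ?case using findim_mod_trans[OF _ _ finite.emptyI] not_findim_mod_even_yseq[OF S] by blast
qed

lemma block_stage_eq: "block_stage k = gen_pair ` {p. fst p < k}"
proof (induction k)
  case 0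
  then show ?case by simp
next
  case (Suc k)
  have "gen_pair ` Pair k ` UNIV = range (block k (block_stage k))"
    unfolding image_image gen_pair_def by simp
  then have "block_stage (Suc k) = block_stage k \<union> gen_pair ` Pair k ` UNIV"
    by simp
  also have "\<dots> = gen_pair ` ({p. fst p < k} \<union> Pair k ` UNIV)" by (simp only: Suc.IH image_Un)
  also have "{p. fst p < k} \<union> Pair k ` UNIV = {p. fst p < Suc k}" by auto
  finally show ?case .
qed

lemma gen_pair_below: "gen_pair ` {..<(k, j)} = block_stage k \<union> block k (block_stage k) ` {..<j}"
proof -
  have "{..<(k, j)} = {p. fst p < k} \<union> Pair k ` {..<j}" by (auto simp: less_prod_def')
  moreover have "gen_pair ` Pair k ` {..<j} = block k (block_stage k) ` {..<j}"
    unfolding image_image gen_pair_def by simp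
  ultimately show ?thesis by (simp only: image_Un block_stage_eq[symmetric])
qed

lemma gen_pair_atMost: "gen_pair ` {..(k, j)} = block_stage k \<union> block k (block_stage k) ` {..j}"
proof -
  have "{..(k, j)} = {..<(k, Suc j)}" by (auto simp: less_eq_prod_def less_prod_def')
  then show ?thesis by (simp add: gen_pair_below lessThan_Suc_atMost)
qed

lemma indep_pair_mod_gen_pair:
  assumes "k = 0 \<or> j \<noteq> 0"
  shows "indep_pair_mod (generated (gen_pair ` {..<(k, j)})) (gen_pair (k, j))"
proof -
  let ?G = "block_stage k"
  let ?S = "block_base k ?G"
  let ?Y = "yseq ?S ` {..<2 * j}"
  have S: "submod ?S" "K \<subseteq> ?S" "\<not> findim_mod ?S (range T)"
    by (simp_all add: submod_block_base K_subset_block_base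
        not_findim_mod_block_base[OF not_findim_mod_block_stage])
  have "block k ?G i \<in> ?S \<union> ?Y" if "i < j" for i
  proof (cases "k \<noteq> 0 \<and> i = 0")
    case True
    then show ?thesis using target_in_block_base[of k ?G] by (simp add: block_def)
  next
    case False
    then have "block k ?G i = yseq ?S (2 * i)" by (auto simp: block_def)
    then show ?thesis using that by simp
  qed
  then have "gen_pair ` {..<(k, j)} \<subseteq> ?S \<union> ?Y"
    unfolding gen_pair_below using subset_block_base[of ?G k] by blast
  also have "\<dots> \<subseteq> span (?S \<union> ?Y \<union> T ` ?Y)" using span_superset[of "?S \<union> ?Y \<union> T ` ?Y"] by blast
  finally have "generated (gen_pair ` {..<(k, j)}) \<subseteq> span (?S \<union> ?Y \<union> T ` ?Y)"
    by (rule generated_least[OF _ submod_span_yseq[OF S]])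
  moreover have "gen_pair (k, j) = yseq ?S (2 * j)" using assms by (auto simp: gen_pair_def block_def)
  ultimately show ?thesis by (simp add: indep_pair_mod_antimono[OF indep_pair_mod_yseq[OF S]])
qed

lemma gen_pair_not_in: "gen_pair p \<notin> generated (gen_pair ` {..<p})"
proof (cases p)
  case (Pair k j)
  show ?thesis
  proof (cases "k = 0 \<or> j \<noteq> 0")
    case True
    then show ?thesis using not_in_if_indep_pair_mod[OF indep_pair_mod_gen_pair] Pair by blast
  next
    case False
    then obtain i where "k = Suc i" "j = 0" using not0_implies_Suc by blast
    moreover have "gen_pair (Suc i, 0) = target i (generated (block_stage (Suc i)))"
      by (simp add: gen_pair_def block_def)
    ultimately show ?thesis
      using target_not_in[OF ex_not_in_generated[OF not_findim_mod_block_stage]] Pair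
      by (simp add: gen_pair_below del: block_stage.simps)
  qed
qed

lemma ex_good_stratification: "\<exists>(r :: nat rel) M. good_stratification scale u r M"
proof -
  have reach: "from_nat_into C k \<in> generated (gen_pair ` {..(Suc k, 0)})" for k
    using basis_in_adjoin_target[OF submod_subspace[OF submod_generated]]
    by (simp add: gen_pair_atMost block_def generated_insert)
  have spanning: "span (\<Union>p. generated (gen_pair ` {..p})) = UNIV"
    by (rule span_UNIV_if_basis_reached) (use reach in blast)
  have "good_stratification scale u {(m, n). prod_decode m \<le> prod_decode n}
      (\<lambda>a. generated (gen_pair ` {..prod_decode a}))"
  proof (rule good_stratification_from_generators[OF bij_prod_decode _ gen_pair_not_in _ spanning])
    show "\<exists>q. p < q" for p :: "nat \<times> nat"
      by (rule exI[of _ "(fst p, Suc (snd p))"]) (simp add: less_prod_def')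
    show "indep_pair_mod (generated (gen_pair ` {..<p})) (gen_pair p)"
      if "(\<forall>q. p \<le> q) \<or> (\<exists>q<p. \<forall>s. \<not> (q < s \<and> s < p))" for p
    proof (cases p)
      case (Pair k j)
      then have "k = 0 \<or> j \<noteq> 0" using that lex_pair_limit[of k] by auto
      then show ?thesis using indep_pair_mod_gen_pair Pair by blast
    qed
  qed
  then show ?thesis by blast
qed

end

theorem proposition5:
  fixes scale :: "'a::field \<Rightarrow> 'b::ab_group_add \<Rightarrow> 'b" and u :: "'b \<Rightarrow> 'b"
  assumes "vector_space scale"
    and "\<exists>B. \<not> module.dependent scale B \<and> module.span scale B = UNIV \<and> countable B \<and> infinite B"
    and "Vector_Spaces.linear scale scale u"
    and "\<forall>c. \<not> dominant_eigenvalue scale u c"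
    and "\<forall>x. \<exists>p. p \<noteq> 0 \<and> poly_endo scale u p x = 0"
  shows "\<exists>(r :: nat rel) M. good_stratification scale u r M"
proof -
  obtain B where B: "\<not> module.dependent scale B" "module.span scale B = UNIV" "countable B" "infinite B"
    using assms(2) by blast
  have "countable_torsion scale u B"
    by (intro countable_torsion.intro linear_endo.intro linear_endo_axioms.intro countable_torsion_axioms.intro)
      (use assms(1,3-5) B in auto)
  then interpret countable_torsion scale u B .
  show ?thesis
  proof (cases "\<exists>c. findim (range (\<lambda>x. shift c (shift c x)))")
    case True
    then obtain c where "findim (range (\<lambda>x. shift c (shift c x)))" by blast
    then interpret finite_square_rank scale u B c by unfold_locales
    show ?thesis by (rule ex_good_stratification)
  next
    case False
    then interpret infinite_square_rank scale u B by unfold_locales blast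
    show ?thesis by (rule ex_good_stratification)
  qed
qed

end
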